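(* Let $\epsilon \in (0,\exp(-2))$, let $G$ be an abelian group, and let $A \subset G$ be a non-empty finite distributional $\epsilon$-approximate group. Then \[\Delta \mathbb{H}(A) \le 2\epsilon \log (\epsilon^{-1}|A|).\]
   Context: $\log$ is the natural logarithm. For a random variable $X$ with finite range $R$ (the set of values taken with positive probability), its Shannon entropy is $\mathbb{H}(X) = -\sum_{x\in R}\mathbb{P}(X=x)\log \mathbb{P}(X=x)$. For a non-empty finite set $A$, $U_A$ denotes a random variable uniformly distributed on $A$. In expressions such as $U_A+U_A$ the two summands are independent copies. For a non-empty finite subset $A$ of an abelian group, $\Delta\mathbb{H}(A) := \mathbb{H}(U_A+U_A) - \mathbb{H}(U_A)$. Definition: for $\epsilon>0$, an abelian group $G$ and a non-empty finite subset $A$ of $G$, $A$ is a distributional $\epsilon$-approximate group of $G$ if there exists a subset $U \subset G$ with $|U| = |A|$ such that the proportion of pairs $(a,b) \in A \times A$ with $a+b \in U$ is at least $1-\epsilon$. *)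

theory Defs
  imports "HOL-Probability.Probability"
begin

definition shannon_entropy :: "'a pmf \<Rightarrow> real" where
  "shannon_entropy p = - (\<Sum>x\<in>set_pmf p. pmf p x * ln (pmf p x))"

definition unif :: "'a set \<Rightarrow> 'a pmf" where
  "unif A = pmf_of_set A"

definition sum_unif :: "'a::ab_group_add set \<Rightarrow> 'a pmf" where
  "sum_unif A = map_pmf (\<lambda>(x, y). x + y) (pair_pmf (unif A) (unif A))"

definition doubling_entropy :: "'a::ab_group_add set \<Rightarrow> real" where
  "doubling_entropy A = shannon_entropy (sum_unif A) - shannon_entropy (unif A)"

definition distributional_approx_group :: "real \<Rightarrow> 'a::ab_group_add set \<Rightarrow> bool" where
  "distributional_approx_group \<epsilon> A \<longleftrightarrow>
     finite A \<and> A \<noteq> {} \<and>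
     (\<exists>U. card U = card A \<and> finite U \<and>
        real (card {(a, b) \<in> A \<times> A. a + b \<in> U}) \<ge> (1 - \<epsilon>) * real (card (A \<times> A)))"

end

theory Submission imports Defs begin

text \<open>
  Split the distribution of \<open>U\<^sub>A + U\<^sub>A\<close> into its mass \<open>1 - t\<close> on \<open>U\<close> and its mass
  \<open>t \<le> \<epsilon>\<close> off \<open>U\<close>. The part on \<open>U\<close> lives on \<open>|A|\<close> points and the rest on at most
  \<open>|A|\<^sup>2\<close> points, so the entropy exceeds \<open>log |A|\<close> by at most
  \<open>t log |A| + h(t)\<close>, with \<open>h\<close> the binary entropy; for \<open>t \<le> \<epsilon>\<close> this is at most
  \<open>2\<epsilon> log (|A|/\<epsilon>)\<close>.
\<close>

lemma pair_pmf_of_set: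
  assumes "finite A" "A \<noteq> {}" "finite B" "B \<noteq> {}"
  shows "pair_pmf (pmf_of_set A) (pmf_of_set B) = pmf_of_set (A \<times> B)"
proof (rule pmf_eqI)
  fix z :: "'a \<times> 'b"
  show "pmf (pair_pmf (pmf_of_set A) (pmf_of_set B)) z = pmf (pmf_of_set (A \<times> B)) z"
    using assms by (cases z) (auto simp: pmf_pair indicator_def card_cartesian_product)
qed

lemma sum_unif_eq_map_pmf:
  assumes "finite A" "A \<noteq> {}"
  shows "sum_unif A = map_pmf (\<lambda>(x, y). x + y) (pmf_of_set (A \<times> A))"
  unfolding sum_unif_def unif_def using pair_pmf_of_set[OF assms assms] by simp

lemma set_pmf_sum_unif:
  assumes "finite A" "A \<noteq> {}"
  shows "set_pmf (sum_unif A) = (\<lambda>(x, y). x + y) ` (A \<times> A)"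
  using assms by (simp add: sum_unif_eq_map_pmf)

lemma card_set_pmf_sum_unif_le:
  assumes "finite A" "A \<noteq> {}"
  shows "card (set_pmf (sum_unif A)) \<le> card A ^ 2"
proof -
  have "card ((\<lambda>(x, y). x + y) ` (A \<times> A)) \<le> card (A \<times> A)"
    using assms(1) by (intro card_image_le) simp
  then show ?thesis
    using assms by (simp add: set_pmf_sum_unif card_cartesian_product power2_eq_square)
qed

lemma prob_sum_unif:
  assumes "finite A" "A \<noteq> {}"
  shows "measure_pmf.prob (sum_unif A) U =
           card {(a, b) \<in> A \<times> A. a + b \<in> U} / card (A \<times> A)"
proof -
  have "(A \<times> A) \<inter> (\<lambda>(x, y). x + y) -` U = {(a, b) \<in> A \<times> A. a + b \<in> U}" by auto
  then show ?thesis using assms by (simp add: sum_unif_eq_map_pmf measure_pmf_of_set)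
qed

lemma shannon_entropy_pmf_of_set:
  assumes "finite A" "A \<noteq> {}"
  shows "shannon_entropy (pmf_of_set A) = ln (card A)"
  using assms by (simp add: shannon_entropy_def ln_div)

lemma neg_sum_mult_ln_le:
  fixes p :: "'a \<Rightarrow> real" and N :: real
  assumes "finite T" "\<And>x. x \<in> T \<Longrightarrow> 0 \<le> p x" "card T \<le> N" "0 < N"
  defines "s \<equiv> \<Sum>x\<in>T. p x"
  shows "- (\<Sum>x\<in>T. p x * ln (p x)) \<le> s * ln N - s * ln s"
proof (cases "s = 0")
  case True
  then have "\<forall>x\<in>T. p x = 0" using assms(1,2) by (simp add: s_def sum_nonneg_eq_0_iff)
  then show ?thesis using True by simp
next
  case False
  then have s: "0 < s" using assms(2) sum_nonneg[of T p] unfolding s_def by force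
  have pointwise: "p x * ln s - p x * ln N - p x * ln (p x) \<le> s / N - p x" if "x \<in> T" for x
  proof (cases "p x = 0")
    case True then show ?thesis using s assms(4) by simp
  next
    case False
    then have px: "0 < p x" using assms(2) that by force
    have "ln (s / (N * p x)) \<le> s / (N * p x) - 1"
      by (rule ln_le_minus_one) (use s px assms(4) in simp)
    then have "p x * ln (s / (N * p x)) \<le> p x * (s / (N * p x) - 1)"
      using px by (intro mult_left_mono) auto
    moreover have "p x * ln (s / (N * p x)) = p x * ln s - p x * ln N - p x * ln (p x)"
      using s px assms(4) by (simp add: ln_div ln_mult algebra_simps)
    moreover have "p x * (s / (N * p x) - 1) = s / N - p x"
      using px assms(4) by (simp add: field_simps)
    ultimately show ?thesis by simp
  qed
  have "(\<Sum>x\<in>T. p x * ln s - p x * ln N - p x * ln (p x)) \<le> (\<Sum>x\<in>T. s / N - p x)"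
    by (rule sum_mono) (rule pointwise)
  also have "\<dots> = card T * s / N - s" by (simp add: sum_subtractf s_def)
  also have "\<dots> \<le> 0" using assms(3,4) s by (simp add: divide_le_eq)
  finally show ?thesis
    by (simp add: sum_subtractf sum.distrib sum_distrib_left[symmetric] sum_distrib_right[symmetric] s_def algebra_simps)
qed

lemma shannon_entropy_le_split:
  assumes "finite (set_pmf p)" "finite U" "U \<noteq> {}" "card (set_pmf p) \<le> M"
  defines "s \<equiv> measure_pmf.prob p U"
  shows "shannon_entropy p \<le> s * ln (card U) - s * ln s + (1 - s) * ln M - (1 - s) * ln (1 - s)"
proof -
  define S where "S = set_pmf p"
  have split: "(\<Sum>x\<in>S. f x) = (\<Sum>x\<in>S \<inter> U. f x) + (\<Sum>x\<in>S - U. f x)" for f :: "'a \<Rightarrow> real"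
    using assms(1) by (simp add: S_def sum.Int_Diff)
  have mass_on: "(\<Sum>x\<in>S \<inter> U. pmf p x) = s"
    using assms(1) measure_Int_set_pmf[of p U]
    by (simp add: s_def S_def measure_measure_pmf_finite Int_commute)
  have mass_off: "(\<Sum>x\<in>S - U. pmf p x) = 1 - s"
    using split[of "pmf p"] mass_on sum_pmf_eq_1[of S p] assms(1) by (simp add: S_def)
  have "M > 0"
    using assms(1,4) set_pmf_not_empty[of p] card_gt_0_iff[of "set_pmf p"] by linarith
  have on_U: "- (\<Sum>x\<in>S \<inter> U. pmf p x * ln (pmf p x)) \<le> s * ln (card U) - s * ln s"
    using neg_sum_mult_ln_le[of "S \<inter> U" "pmf p" "card U"] assms(2,3) card_mono[OF assms(2), of "S \<inter> U"]
    by (simp add: mass_on card_gt_0_iff)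
  have off_U: "- (\<Sum>x\<in>S - U. pmf p x * ln (pmf p x)) \<le> (1 - s) * ln M - (1 - s) * ln (1 - s)"
    using neg_sum_mult_ln_le[of "S - U" "pmf p" M] assms(1,4) card_mono[OF assms(1), of "S - U"] \<open>M > 0\<close>
    unfolding mass_off[symmetric] by (simp add: S_def)
  show ?thesis
    using split[of "\<lambda>x. pmf p x * ln (pmf p x)"] on_U off_U
    by (simp add: shannon_entropy_def S_def)
qed

lemma neg_mult_ln_one_minus_le:
  fixes t :: real
  assumes "0 \<le> t" "t < 1"
  shows "- ((1 - t) * ln (1 - t)) \<le> t"
proof -
  have "ln (1 / (1 - t)) \<le> 1 / (1 - t) - 1" by (rule ln_le_minus_one) (use assms in simp)
  then have "- ln (1 - t) \<le> t / (1 - t)" using assms by (simp add: ln_div field_simps)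
  then have "(1 - t) * (- ln (1 - t)) \<le> (1 - t) * (t / (1 - t))"
    using assms by (intro mult_left_mono) auto
  then show ?thesis using assms by simp
qed

lemma neg_mult_ln_le_tangent:
  fixes t e :: real
  assumes "0 \<le> t" "0 < e"
  shows "- (t * ln t) \<le> e - t - t * ln e"
proof (cases "t = 0")
  case True then show ?thesis using assms by simp
next
  case False
  then have t: "0 < t" using assms by simp
  have "ln (e / t) \<le> e / t - 1" by (rule ln_le_minus_one) (use assms t in simp)
  then have "t * ln (e / t) \<le> t * (e / t - 1)" using t by (intro mult_left_mono) auto
  also have "\<dots> = e - t" using t by (simp add: field_simps)
  finally show ?thesis using t assms by (simp add: ln_div algebra_simps)
qed

lemma binary_entropy_tail_le:
  fixes t \<epsilon> n :: real
  assumes "0 \<le> t" "t \<le> \<epsilon>" "0 < \<epsilon>" "\<epsilon> \<le> exp (-1)" "1 \<le> n"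
  shows "t * ln n - t * ln t - (1 - t) * ln (1 - t) \<le> 2 * \<epsilon> * ln (n / \<epsilon>)"
proof -
  have "t < 1" using assms(2,4) exp_less_one_iff[of "-1 :: real"] by linarith
  have "ln \<epsilon> \<le> -1" using ln_le_cancel_iff[of \<epsilon> "exp (-1)"] assms(3,4) by simp
  moreover have "0 \<le> ln n" using assms(5) by simp
  moreover have "ln (n / \<epsilon>) = ln n - ln \<epsilon>" using assms(3,5) by (simp add: ln_div)
  ultimately have L: "1 \<le> ln (n / \<epsilon>)" "ln (n / \<epsilon>) = ln n - ln \<epsilon>" by simp_all
  have "t * ln n - t * ln t - (1 - t) * ln (1 - t) \<le> t * ln n + (\<epsilon> - t - t * ln \<epsilon>) + t"
    using neg_mult_ln_le_tangent[OF assms(1,3)] neg_mult_ln_one_minus_le[OF assms(1) \<open>t < 1\<close>]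
    by linarith
  also have "\<dots> = t * ln (n / \<epsilon>) + \<epsilon>" unfolding L(2) by (simp add: algebra_simps)
  also have "\<dots> \<le> \<epsilon> * ln (n / \<epsilon>) + \<epsilon> * ln (n / \<epsilon>)"
    using assms(2,3) L(1) by (intro add_mono mult_right_mono) auto
  finally show ?thesis by simp
qed

theorem mainTheorem2:
  fixes \<epsilon> :: real and A :: "'a::ab_group_add set"
  assumes "0 < \<epsilon>" and "\<epsilon> < exp (-2)"
    and "finite A" and "A \<noteq> {}"
    and "distributional_approx_group \<epsilon> A"
  shows "doubling_entropy A \<le> 2 * \<epsilon> * ln (real (card A) / \<epsilon>)"
proof -
  obtain U where U: "card U = card A" "finite U"
    and hits: "(1 - \<epsilon>) * card (A \<times> A) \<le> card {(a, b) \<in> A \<times> A. a + b \<in> U}"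
    using assms(5) unfolding distributional_approx_group_def by blast
  have "U \<noteq> {}" using U assms(3,4) by auto
  define t where "t = 1 - measure_pmf.prob (sum_unif A) U"
  have "0 \<le> t" by (simp add: t_def)
  have "t \<le> \<epsilon>"
    using hits assms(3,4) by (simp add: t_def prob_sum_unif card_gt_0_iff field_simps)
  have "shannon_entropy (sum_unif A)
          \<le> (1 - t) * ln (card A) - (1 - t) * ln (1 - t) + t * ln (card A ^ 2) - t * ln t"
    using shannon_entropy_le_split[of "sum_unif A" U "card A ^ 2"] \<open>U \<noteq> {}\<close> U
      card_set_pmf_sum_unif_le[OF assms(3,4)]
    by (simp add: t_def set_pmf_sum_unif assms(3,4))
  then have "doubling_entropy A \<le> t * ln (card A) - t * ln t - (1 - t) * ln (1 - t)"
    using assms(3,4)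
    by (simp add: doubling_entropy_def unif_def shannon_entropy_pmf_of_set ln_realpow algebra_simps)
  also have "\<dots> \<le> 2 * \<epsilon> * ln (card A / \<epsilon>)"
  proof (rule binary_entropy_tail_le)
    show "\<epsilon> \<le> exp (-1)" using assms(2) exp_less_cancel_iff[of "-2" "-1 :: real"] by linarith
    show "1 \<le> real (card A)" using assms(3,4) by (simp add: Suc_leI card_gt_0_iff)
  qed fact+
  finally show ?thesis .
qed

end
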